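(* The least fixed point $(T^*_\infty,P^*_\infty)$ of the modified jump $\Gamma^*_{\mathscr{TP}}$ (the stage at which the modified sequence stabilizes) is consistent, i.e. $T^{*+}_\infty\cap T^{*-}_\infty=\emptyset$ and $P^{*+}_\infty\cap P^{*-}_\infty=\emptyset$, and (hence) sound$^*$, i.e. for every $\mathcal L$-sentence $\varphi$, if either $\#\varphi\in P_0^{*-}$ or $(\mathbb N,T^*_\infty,P^*_\infty)\models_{SK}\varphi\vee\neg\varphi$, then $(\mathbb N,T^*_\infty,P^*_\infty)\not\models_{SK}\mathscr P(\varphi)$.
   Context: Language. Let $\mathcal L_{\mathbb N}$ be the language of first-order Peano arithmetic and $\mathcal L=\mathcal L_{\mathbb N}\cup\{\mathrm T,\mathrm P\}$ with unary predicates $\mathrm T,\mathrm P$. $\mathcal L$-formulas are in Tait style: literals are $s=t$, $s\neq t$, $\mathrm Tt$, $\neg\mathrm Tt$, $\mathrm Pt$, $\neg\mathrm Pt$; formulas are built from literals by $\wedge,\vee,\forall,\exists$; negation of an arbitrary formula is defined by De Morgan dualities with $\neg\neg\varphi:=\varphi$. A standard Gödel numbering is fixed; $\#e$ is the code of $e$, $\ulcorner e\urcorner$ the numeral of $\#e$, $\mathrm{val}(t)$ the value of a closed term $t$, $\dot\neg$ the primitive recursive function with $\dot\neg(\#\varphi)=\#\neg\varphi$; $\mathrm T\varphi,\mathrm P\varphi$ abbreviate $\mathrm T\ulcorner\varphi\urcorner,\mathrm P\ulcorner\varphi\urcorner$. Semantics. A partial model is $(\mathbb N,T,P)$ with $\mathbb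 N$ the standard model and $T=(T^+,T^-)$, $P=(P^+,P^-)$ pairs of subsets of $\omega$. Strong Kleene satisfaction $\models_{SK}$: arithmetic literals evaluated in $\mathbb N$; $\mathrm Tt$ satisfied iff $\mathrm{val}(t)\in T^+$, $\neg\mathrm Tt$ iff $\mathrm{val}(t)\in T^-$, likewise for $\mathrm P$ with $P^\pm$; conjunction iff both, disjunction iff at least one, $\forall x\varphi(x)$ iff all numeral instances, $\exists x\varphi(x)$ iff some numeral instance. Base paradoxicality. $\mathrm{PA}[\mathrm{SK}]$ is the two-sided sequent calculus for Strong Kleene logic with identity in $\mathcal L$ (initial sequents $\varphi\Rightarrow\varphi$, cut, weakening, the rule from $\Gamma\Rightarrow\Delta,\varphi$ infer $\neg\varphi,\Gamma\Rightarrow\Delta$, usual rules for $\wedge,\vee,\forall,\exists$, reflexivity $\Rightarrow t=t$, replacement from $\Gamma\Rightarrow\Delta,\varphi(t)$ infer $\Gamma\Rightarrow\Delta,s\neq t,\varphi(s)$) plus the initial sequents of Peano arithmetic and the induction rule for all $\mathcal L$-formulas. A sentence $\varphi$ is base paradoxical iff $\mathrm{PA}[\mathrm{SK}]$ derives $\varphi\Leftrightarrow\neg\mathrm T\varphi$ and $\neg\varphi\Leftrightarrow\mathrm T\varphi$ ($\Leftrightarrow$ meaning both sequents). $B(x)$ is an $\mathcal L_{\mathbb N}$-formula defining in $\mathbb N$ the set of codes of base paradoxical sentences, and $\Pi(x):=B(x)\vee B(\dot\neg x)$. Paradoxicality clauses. Let $\mathscr P(x)$ be the $\mathcal L$-formula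 which is the disjunction of: (1) $x$ codes a sentence and $\Pi(x)$; (2) $x$ codes a sentence $\mathrm Tt$ ($t$ a closed term) and $\mathrm P(\mathrm{val}(t))$; (3) $x$ codes a sentence $\neg\mathrm Tt$ and $\mathrm P(\mathrm{val}(t))$; (4) $x$ codes a sentence $\psi\wedge\theta$ and $(\mathrm P\psi\wedge\mathrm P\theta)\vee(\mathrm T\psi\wedge\mathrm P\theta)\vee(\mathrm T\theta\wedge\mathrm P\psi)$; (5) $x$ codes a sentence $\psi\vee\theta$ and $(\mathrm P\psi\wedge\mathrm P\theta)\vee(\neg\mathrm T\psi\wedge\mathrm P\theta)\vee(\neg\mathrm T\theta\wedge\mathrm P\psi)$; (6) $x$ codes a sentence $\forall v\psi$ and $\exists y\,\mathrm P\psi(\dot y)\wedge\forall y(\mathrm P\psi(\dot y)\vee\mathrm T\psi(\dot y))$; (7) $x$ codes a sentence $\exists v\psi$ and $\exists y\,\mathrm P\psi(\dot y)\wedge\forall y(\mathrm P\psi(\dot y)\vee\neg\mathrm T\psi(\dot y))$; here $\psi(\dot y)$ is the code of the result of substituting the numeral of $y$ for $v$. Write $\mathscr P(\varphi)$ for $\mathscr P(\ulcorner\varphi\urcorner)$. Modified sequence. Let $P_0^{*-}$ be the set of codes of the sentences $\mathrm P\ulcorner\varphi\urcorner$ for $\varphi$ an $\mathcal L$-formula. Define $\Gamma^*_{\mathscr{TP}}(T,P)=\big((\{\#\varphi:(\mathbb N,T,P)\models_{SK}\varphi\},\{\#\varphi:(\mathbb N,T,P)\models_{SK}\neg\varphi\}),(\{\#\varphi:(\mathbb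 N,T,P)\models_{SK}\mathscr P(\varphi)\},\{\#\varphi:(\mathbb N,T,P)\models_{SK}\varphi\vee\neg\varphi\}\cup P_0^{*-})\big)$, $\varphi$ ranging over $\mathcal L$-sentences. Define $(T^*_0,P^*_0)=((\emptyset,\emptyset),(\emptyset,P_0^{*-}))$, $(T^*_{\xi+1},P^*_{\xi+1})=\Gamma^*_{\mathscr{TP}}(T^*_\xi,P^*_\xi)$, and $(T^*_\lambda,P^*_\lambda)=\bigcup_{\xi<\lambda}(T^*_\xi,P^*_\xi)$ (componentwise union) for limit $\lambda$; this sequence reaches the least fixed point $(T^*_\infty,P^*_\infty)$ of $\Gamma^*_{\mathscr{TP}}$. *)

theory Defs
  imports Main "HOL-Library.Nat_Bijection" "HOL-Library.Product_Order"
begin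

section \<open>Syntax of L = L_N + {T, P} (Tait style)\<close>

datatype trm = Var nat | Zero | Sc trm | Plus trm trm | Times trm trm

datatype form =
    Eq trm trm | Neq trm trm
  | Tr trm | NTr trm
  | Pr trm | NPr trm
  | Conj form form | Disj form form
  | All nat form | Ex nat form

fun neg :: "form \<Rightarrow> form" where
  "neg (Eq s t) = Neq s t"
| "neg (Neq s t) = Eq s t"
| "neg (Tr t) = NTr t"
| "neg (NTr t) = Tr t"
| "neg (Pr t) = NPr t"
| "neg (NPr t) = Pr t"
| "neg (Conj A B) = Disj (neg A) (neg B)"
| "neg (Disj A B) = Conj (neg A) (neg B)"
| "neg (All x A) = Ex x (neg A)"
| "neg (Ex x A) = All x (neg A)"

fun tvars :: "trm \<Rightarrow> nat set" where
  "tvars (Var n) = {n}"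
| "tvars Zero = {}"
| "tvars (Sc t) = tvars t"
| "tvars (Plus s t) = tvars s \<union> tvars t"
| "tvars (Times s t) = tvars s \<union> tvars t"

fun tsubst :: "nat \<Rightarrow> trm \<Rightarrow> trm \<Rightarrow> trm" where
  "tsubst x u (Var n) = (if n = x then u else Var n)"
| "tsubst x u Zero = Zero"
| "tsubst x u (Sc t) = Sc (tsubst x u t)"
| "tsubst x u (Plus s t) = Plus (tsubst x u s) (tsubst x u t)"
| "tsubst x u (Times s t) = Times (tsubst x u s) (tsubst x u t)"

fun fv :: "form \<Rightarrow> nat set" where
  "fv (Eq s t) = tvars s \<union> tvars t"
| "fv (Neq s t) = tvars s \<union> tvars t"
| "fv (Tr t) = tvars t"
| "fv (NTr t) = tvars t"
| "fv (Pr t) = tvars t"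
| "fv (NPr t) = tvars t"
| "fv (Conj A B) = fv A \<union> fv B"
| "fv (Disj A B) = fv A \<union> fv B"
| "fv (All x A) = fv A - {x}"
| "fv (Ex x A) = fv A - {x}"

fun subst :: "nat \<Rightarrow> trm \<Rightarrow> form \<Rightarrow> form" where
  "subst x u (Eq s t) = Eq (tsubst x u s) (tsubst x u t)"
| "subst x u (Neq s t) = Neq (tsubst x u s) (tsubst x u t)"
| "subst x u (Tr t) = Tr (tsubst x u t)"
| "subst x u (NTr t) = NTr (tsubst x u t)"
| "subst x u (Pr t) = Pr (tsubst x u t)"
| "subst x u (NPr t) = NPr (tsubst x u t)"
| "subst x u (Conj A B) = Conj (subst x u A) (subst x u B)"
| "subst x u (Disj A B) = Disj (subst x u A) (subst x u B)"
| "subst x u (All y A) = (if y = x then All y A else All y (subst x u A))"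
| "subst x u (Ex y A) = (if y = x then Ex y A else Ex y (subst x u A))"

fun freefor :: "trm \<Rightarrow> nat \<Rightarrow> form \<Rightarrow> bool" where
  "freefor u x (Conj A B) = (freefor u x A \<and> freefor u x B)"
| "freefor u x (Disj A B) = (freefor u x A \<and> freefor u x B)"
| "freefor u x (All y A) = (x \<notin> fv (All y A) \<or> (y \<notin> tvars u \<and> freefor u x A))"
| "freefor u x (Ex y A) = (x \<notin> fv (Ex y A) \<or> (y \<notin> tvars u \<and> freefor u x A))"
| "freefor u x _ = True"

definition sentence :: "form \<Rightarrow> bool" where
  "sentence A \<longleftrightarrow> fv A = {}"

fun num :: "nat \<Rightarrow> trm" where
  "num 0 = Zero"
| "num (Suc n) = Sc (num n)"

fun ctrm :: "trm \<Rightarrow> nat" where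
  "ctrm (Var n) = prod_encode (0, n)"
| "ctrm Zero = prod_encode (1, 0)"
| "ctrm (Sc t) = prod_encode (2, ctrm t)"
| "ctrm (Plus s t) = prod_encode (3, prod_encode (ctrm s, ctrm t))"
| "ctrm (Times s t) = prod_encode (4, prod_encode (ctrm s, ctrm t))"

fun code :: "form \<Rightarrow> nat" where
  "code (Eq s t) = prod_encode (0, prod_encode (ctrm s, ctrm t))"
| "code (Neq s t) = prod_encode (1, prod_encode (ctrm s, ctrm t))"
| "code (Tr t) = prod_encode (2, ctrm t)"
| "code (NTr t) = prod_encode (3, ctrm t)"
| "code (Pr t) = prod_encode (4, ctrm t)"
| "code (NPr t) = prod_encode (5, ctrm t)"
| "code (Conj A B) = prod_encode (6, prod_encode (code A, code B))"
| "code (Disj A B) = prod_encode (7, prod_encode (code A, code B))"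
| "code (All x A) = prod_encode (8, prod_encode (x, code A))"
| "code (Ex x A) = prod_encode (9, prod_encode (x, code A))"

definition gq :: "form \<Rightarrow> trm" where
  "gq A = num (code A)"

section \<open>The sequent calculus PA[SK]\<close>

inductive deriv :: "form set \<Rightarrow> form set \<Rightarrow> bool" where
  ax: "deriv {A} {A}"
| cut: "deriv \<Gamma> (insert A \<Delta>) \<Longrightarrow> deriv (insert A \<Gamma>) \<Delta> \<Longrightarrow> deriv \<Gamma> \<Delta>"
| weakL: "deriv \<Gamma> \<Delta> \<Longrightarrow> deriv (insert A \<Gamma>) \<Delta>"
| weakR: "deriv \<Gamma> \<Delta> \<Longrightarrow> deriv \<Gamma> (insert A \<Delta>)"
| negL: "deriv \<Gamma> (insert A \<Delta>) \<Longrightarrow> deriv (insert (neg A) \<Gamma>) \<Delta>"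
| conjL1: "deriv (insert A \<Gamma>) \<Delta> \<Longrightarrow> deriv (insert (Conj A B) \<Gamma>) \<Delta>"
| conjL2: "deriv (insert B \<Gamma>) \<Delta> \<Longrightarrow> deriv (insert (Conj A B) \<Gamma>) \<Delta>"
| conjR: "deriv \<Gamma> (insert A \<Delta>) \<Longrightarrow> deriv \<Gamma> (insert B \<Delta>) \<Longrightarrow> deriv \<Gamma> (insert (Conj A B) \<Delta>)"
| disjL: "deriv (insert A \<Gamma>) \<Delta> \<Longrightarrow> deriv (insert B \<Gamma>) \<Delta> \<Longrightarrow> deriv (insert (Disj A B) \<Gamma>) \<Delta>"
| disjR1: "deriv \<Gamma> (insert A \<Delta>) \<Longrightarrow> deriv \<Gamma> (insert (Disj A B) \<Delta>)"
| disjR2: "deriv \<Gamma> (insert B \<Delta>) \<Longrightarrow> deriv \<Gamma> (insert (Disj A B) \<Delta>)"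
| allL: "freefor t x A \<Longrightarrow> deriv (insert (subst x t A) \<Gamma>) \<Delta> \<Longrightarrow> deriv (insert (All x A) \<Gamma>) \<Delta>"
| allR: "freefor (Var y) x A \<Longrightarrow> y \<notin> \<Union>(fv ` (\<Gamma> \<union> \<Delta>)) \<Longrightarrow> y \<notin> fv (All x A) \<Longrightarrow>
         deriv \<Gamma> (insert (subst x (Var y) A) \<Delta>) \<Longrightarrow> deriv \<Gamma> (insert (All x A) \<Delta>)"
| exL: "freefor (Var y) x A \<Longrightarrow> y \<notin> \<Union>(fv ` (\<Gamma> \<union> \<Delta>)) \<Longrightarrow> y \<notin> fv (Ex x A) \<Longrightarrow>
         deriv (insert (subst x (Var y) A) \<Gamma>) \<Delta> \<Longrightarrow> deriv (insert (Ex x A) \<Gamma>) \<Delta>"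
| exR: "freefor t x A \<Longrightarrow> deriv \<Gamma> (insert (subst x t A) \<Delta>) \<Longrightarrow> deriv \<Gamma> (insert (Ex x A) \<Delta>)"
| refl: "deriv {} {Eq t t}"
| repl: "freefor t x A \<Longrightarrow> freefor s x A \<Longrightarrow> deriv \<Gamma> (insert (subst x t A) \<Delta>) \<Longrightarrow>
         deriv \<Gamma> (insert (Neq s t) (insert (subst x s A) \<Delta>))"
| pa1: "deriv {} {Neq (Sc s) Zero}"
| pa2: "deriv {Eq (Sc s) (Sc t)} {Eq s t}"
| pa3: "deriv {} {Eq (Plus s Zero) s}"
| pa4: "deriv {} {Eq (Plus s (Sc t)) (Sc (Plus s t))}"
| pa5: "deriv {} {Eq (Times s Zero) Zero}"
| pa6: "deriv {} {Eq (Times s (Sc t)) (Plus (Times s t) s)}"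
| ind: "x \<notin> \<Union>(fv ` (\<Gamma> \<union> \<Delta>)) \<Longrightarrow> freefor (Sc (Var x)) x A \<Longrightarrow> freefor Zero x A \<Longrightarrow> freefor t x A \<Longrightarrow>
        deriv (insert A \<Gamma>) (insert (subst x (Sc (Var x)) A) \<Delta>) \<Longrightarrow>
        deriv (insert (subst x Zero A) \<Gamma>) (insert (subst x t A) \<Delta>)"

definition base_par :: "form \<Rightarrow> bool" where
  "base_par A \<longleftrightarrow> sentence A \<and>
     deriv {A} {NTr (gq A)} \<and> deriv {NTr (gq A)} {A} \<and>
     deriv {neg A} {Tr (gq A)} \<and> deriv {Tr (gq A)} {neg A}"

text \<open>Truth in N of Pi(#A) = B(#A) \<or> B(neg-dot #A), B defining base paradoxicality.\<close>
definition Pi :: "form \<Rightarrow> bool" where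
  "Pi A \<longleftrightarrow> base_par A \<or> base_par (neg A)"

section \<open>Strong Kleene semantics over partial models (N, T, P)\<close>

type_synonym pext = "nat set \<times> nat set"  (* (positive, negative) extension *)

fun evalt :: "(nat \<Rightarrow> nat) \<Rightarrow> trm \<Rightarrow> nat" where
  "evalt e (Var n) = e n"
| "evalt e Zero = 0"
| "evalt e (Sc t) = Suc (evalt e t)"
| "evalt e (Plus s t) = evalt e s + evalt e t"
| "evalt e (Times s t) = evalt e s * evalt e t"

fun sat :: "pext \<Rightarrow> pext \<Rightarrow> (nat \<Rightarrow> nat) \<Rightarrow> form \<Rightarrow> bool" where
  "sat T P e (Eq s t) = (evalt e s = evalt e t)"
| "sat T P e (Neq s t) = (evalt e s \<noteq> evalt e t)"
| "sat T P e (Tr t) = (evalt e t \<in> fst T)"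
| "sat T P e (NTr t) = (evalt e t \<in> snd T)"
| "sat T P e (Pr t) = (evalt e t \<in> fst P)"
| "sat T P e (NPr t) = (evalt e t \<in> snd P)"
| "sat T P e (Conj A B) = (sat T P e A \<and> sat T P e B)"
| "sat T P e (Disj A B) = (sat T P e A \<or> sat T P e B)"
| "sat T P e (All x A) = (\<forall>n. sat T P (e(x := n)) A)"
| "sat T P e (Ex x A) = (\<exists>n. sat T P (e(x := n)) A)"

text \<open>(N,T,P) |=_SK A for sentences A (the assignment is irrelevant).\<close>
definition ssat :: "pext \<Rightarrow> pext \<Rightarrow> form \<Rightarrow> bool" where
  "ssat T P A = sat T P (\<lambda>_. 0) A"

section \<open>SK-satisfaction of the paradoxicality formula at the code of a sentence\<close>

definition scrP :: "pext \<Rightarrow> pext \<Rightarrow> form \<Rightarrow> bool" where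
  "scrP T P A \<longleftrightarrow> sentence A \<and> (
     Pi A
   \<or> (\<exists>t. A = Tr t \<and> tvars t = {} \<and> evalt (\<lambda>_. 0) t \<in> fst P)
   \<or> (\<exists>t. A = NTr t \<and> tvars t = {} \<and> evalt (\<lambda>_. 0) t \<in> fst P)
   \<or> (\<exists>B C. A = Conj B C \<and>
        ((code B \<in> fst P \<and> code C \<in> fst P) \<or> (code B \<in> fst T \<and> code C \<in> fst P)
         \<or> (code C \<in> fst T \<and> code B \<in> fst P)))
   \<or> (\<exists>B C. A = Disj B C \<and>
        ((code B \<in> fst P \<and> code C \<in> fst P) \<or> (code B \<in> snd T \<and> code C \<in> fst P)
         \<or> (code C \<in> snd T \<and> code B \<in> fst P)))
   \<or> (\<exists>v B. A = All v B \<and> (\<exists>y. code (subst v (num y) B) \<in> fst P)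
        \<and> (\<forall>y. code (subst v (num y) B) \<in> fst P \<or> code (subst v (num y) B) \<in> fst T))
   \<or> (\<exists>v B. A = Ex v B \<and> (\<exists>y. code (subst v (num y) B) \<in> fst P)
        \<and> (\<forall>y. code (subst v (num y) B) \<in> fst P \<or> code (subst v (num y) B) \<in> snd T)))"

section \<open>The modified jump and its least fixed point\<close>

definition P0star :: "nat set" where
  "P0star = {code (Pr (gq A)) | A. True}"

definition GammaStar :: "pext \<times> pext \<Rightarrow> pext \<times> pext" where
  "GammaStar X = (case X of (T, P) \<Rightarrow>
     (({code A | A. sentence A \<and> ssat T P A}, {code A | A. sentence A \<and> ssat T P (neg A)}),
      ({code A | A. sentence A \<and> scrP T P A},
       {code A | A. sentence A \<and> ssat T P (Disj A (neg A))} \<union> P0star)))"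

text \<open>Least fixed point w.r.t. componentwise inclusion (product order).\<close>
definition lfpStar :: "pext \<times> pext" where
  "lfpStar = lfp GammaStar"

end

theory Submission
  imports Defs
begin

(* Along the iteration of the jump we carry the invariant that T and P are consistent and
   that no code in P+ lies in T+ or T-.  In a stage with this invariant that lies below its own
   jump, every sentence satisfying the paradoxicality formula is a truth-value gap, by induction
   on its logical complexity: each clause of the formula combines gaps (and, in the mixed
   clauses, truths of the matching polarity) into a gap, and base paradoxical sentences are gaps
   because PA[SK] is sound for consistent partial models.  So the next stage puts into P+ only
   gaps, which land neither in T+, T- nor among the determined sentences of P-, and never a
   sentence P[A] of P0*-, since none of these is base paradoxical.  At limits the invariant
   survives because it is a conjunction of disjointness conditions on a chain.  At the fixed
   point P- contains the determined sentences and P0*-, so consistency of P is soundness*. *)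

lemma ctrm_inj: "ctrm s = ctrm t \<Longrightarrow> s = t"
  by (induct s arbitrary: t; case_tac t; simp)

lemma code_inj: "code A = code B \<Longrightarrow> A = B"
  by (induct A arbitrary: B; case_tac B; auto dest: ctrm_inj)

lemma neg_neg [simp]: "neg (neg A) = A"
  by (induct A) auto

lemma subst_neg: "subst x t (neg A) = neg (subst x t A)"
  by (induct A) auto

lemma evalt_num [simp]: "evalt e (num n) = n"
  by (induct n) auto

lemma tvars_num [simp]: "tvars (num n) = {}"
  by (induct n) auto

lemma evalt_cong: "\<forall>z\<in>tvars t. e z = e' z \<Longrightarrow> evalt e t = evalt e' t"
  by (induct t) auto

lemma sat_cong: "\<forall>z\<in>fv A. e z = e' z \<Longrightarrow> sat T P e A = sat T P e' A"
proof (induct A arbitrary: e e')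
  case (All x A)
  have "sat T P (e(x := n)) A = sat T P (e'(x := n)) A" for n
    by (rule All.hyps) (use All.prems in auto)
  then show ?case by simp
next
  case (Ex x A)
  have "sat T P (e(x := n)) A = sat T P (e'(x := n)) A" for n
    by (rule Ex.hyps) (use Ex.prems in auto)
  then show ?case by simp
qed (simp add: ball_Un; metis evalt_cong)+

lemma evalt_upd_nofv: "y \<notin> tvars t \<Longrightarrow> evalt (e(y := n)) t = evalt e t"
  by (rule evalt_cong) auto

lemma sat_upd_nofv: "y \<notin> fv A \<Longrightarrow> sat T P (e(y := n)) A = sat T P e A"
  by (rule sat_cong) auto

lemma evalt_tsubst: "evalt e (tsubst x u t) = evalt (e(x := evalt e u)) t"
  by (induct t) auto

lemma tsubst_nofv: "x \<notin> tvars u \<Longrightarrow> tsubst x t u = u"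
  by (induct u) auto

lemma subst_nofv: "x \<notin> fv A \<Longrightarrow> subst x t A = A"
  by (induct A) (auto simp: tsubst_nofv)

lemma sat_subst:
  "freefor t x A \<Longrightarrow> sat T P e (subst x t A) = sat T P (e(x := evalt e t)) A"
proof (induct A arbitrary: e)
  case (All y B)
  show ?case
  proof (cases "x \<in> fv (All y B)")
    case False
    then show ?thesis by (simp only: subst_nofv sat_upd_nofv not_False_eq_True)
  next
    case True
    with All.prems have "y \<notin> tvars t" "freefor t x B" by auto
    have "x \<noteq> y" using True by simp
    have "sat T P (e(y := n)) (subst x t B) = sat T P (e(x := evalt e t, y := n)) B" for n
      using All.hyps[OF \<open>freefor t x B\<close>, of "e(y := n)"] \<open>y \<notin> tvars t\<close> \<open>x \<noteq> y\<close>
      by (simp add: evalt_upd_nofv fun_upd_twist del: fun_upd_apply)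
    then show ?thesis using \<open>x \<noteq> y\<close> by (simp del: fun_upd_apply)
  qed
next
  case (Ex y B)
  show ?case
  proof (cases "x \<in> fv (Ex y B)")
    case False
    then show ?thesis by (simp only: subst_nofv sat_upd_nofv not_False_eq_True)
  next
    case True
    with Ex.prems have "y \<notin> tvars t" "freefor t x B" by auto
    have "x \<noteq> y" using True by simp
    have "sat T P (e(y := n)) (subst x t B) = sat T P (e(x := evalt e t, y := n)) B" for n
      using Ex.hyps[OF \<open>freefor t x B\<close>, of "e(y := n)"] \<open>y \<notin> tvars t\<close> \<open>x \<noteq> y\<close>
      by (simp add: evalt_upd_nofv fun_upd_twist del: fun_upd_apply)
    then show ?thesis using \<open>x \<noteq> y\<close> by (simp del: fun_upd_apply)
  qed
qed (simp_all add: evalt_tsubst)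

lemma freefor_closed: "tvars t = {} \<Longrightarrow> freefor t x A"
  by (induct A) auto

lemma sat_subst_Var:
  assumes "freefor (Var y) x A" and "y \<notin> fv A - {x}"
  shows "sat T P (e(y := n)) (subst x (Var y) A) = sat T P (e(x := n)) A"
proof -
  have "sat T P (e(y := n)) (subst x (Var y) A) = sat T P (e(y := n, x := n)) A"
    using assms(1) by (simp add: sat_subst)
  also have "\<dots> = sat T P (e(x := n)) A"
    using assms(2) by (intro sat_cong) auto
  finally show ?thesis .
qed

definition consistent :: "pext \<Rightarrow> bool" where
  "consistent X \<longleftrightarrow> fst X \<inter> snd X = {}"

lemma consistent_sat_neg:
  "consistent T \<Longrightarrow> consistent P \<Longrightarrow> sat T P e A \<Longrightarrow> \<not> sat T P e (neg A)"
  by (induct A arbitrary: e) (auto simp: consistent_def)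

lemma deriv_sound:
  assumes "deriv \<Gamma> \<Delta>" and "consistent T" "consistent P"
  shows "\<forall>A\<in>\<Gamma>. sat T P e A \<Longrightarrow> \<exists>B\<in>\<Delta>. sat T P e B"
  using assms(1)
proof (induct arbitrary: e rule: deriv.induct)
  case (negL \<Gamma> A \<Delta>)
  then show ?case using consistent_sat_neg[OF assms(2,3)] by blast
next
  case (allR y x A \<Gamma> \<Delta>)
  show ?case
  proof (cases "\<exists>B\<in>\<Delta>. sat T P e B")
    case False
    have "sat T P (e(x := n)) A" for n
    proof -
      from allR.prems allR.hyps(2) have "\<forall>A\<in>\<Gamma>. sat T P (e(y := n)) A"
        by (auto simp: sat_upd_nofv)
      then have "\<exists>B\<in>insert (subst x (Var y) A) \<Delta>. sat T P (e(y := n)) B"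
        by (rule allR.hyps(5))
      with False allR.hyps(2) have "sat T P (e(y := n)) (subst x (Var y) A)"
        by (auto simp: sat_upd_nofv)
      with allR.hyps(1,3) show ?thesis by (simp add: sat_subst_Var)
    qed
    then show ?thesis by simp
  qed blast
next
  case (exL y x A \<Gamma> \<Delta>)
  then obtain n where "sat T P (e(x := n)) A" by auto
  with exL.hyps(1,3) have "sat T P (e(y := n)) (subst x (Var y) A)"
    by (simp add: sat_subst_Var)
  moreover from exL.prems exL.hyps(2) have "\<forall>A\<in>\<Gamma>. sat T P (e(y := n)) A"
    by (auto simp: sat_upd_nofv)
  ultimately obtain B where "B \<in> \<Delta>" "sat T P (e(y := n)) B"
    using exL.hyps(5) by blast
  with exL.hyps(2) show ?case by (auto simp: sat_upd_nofv)
next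
  case (ind x \<Gamma> \<Delta> A t)
  show ?case
  proof (cases "\<exists>B\<in>\<Delta>. sat T P e B")
    case False
    have "sat T P (e(x := n)) A" for n
    proof (induct n)
      case 0
      with ind.prems ind.hyps(3) show ?case by (simp add: sat_subst del: fun_upd_apply)
    next
      case (Suc n)
      with ind.prems ind.hyps(1) have "\<forall>B\<in>insert A \<Gamma>. sat T P (e(x := n)) B"
        by (auto simp: sat_upd_nofv simp del: fun_upd_apply)
      then have "\<exists>B\<in>insert (subst x (Sc (Var x)) A) \<Delta>. sat T P (e(x := n)) B"
        by (rule ind.hyps(6))
      with False ind.hyps(1) have "sat T P (e(x := n)) (subst x (Sc (Var x)) A)"
        by (auto simp: sat_upd_nofv)
      with ind.hyps(2) show ?case by (simp add: sat_subst fun_upd_same del: fun_upd_apply)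
    qed
    with ind.hyps(4) show ?thesis by (simp add: sat_subst)
  qed blast
qed (auto simp: sat_subst)

lemma ssat_All: "ssat T P (All v B) \<longleftrightarrow> (\<forall>n. ssat T P (subst v (num n) B))"
  by (simp add: ssat_def sat_subst freefor_closed)

lemma ssat_Ex: "ssat T P (Ex v B) \<longleftrightarrow> (\<exists>n. ssat T P (subst v (num n) B))"
  by (simp add: ssat_def sat_subst freefor_closed)

lemma consistent_ssat_neg:
  "consistent T \<Longrightarrow> consistent P \<Longrightarrow> ssat T P A \<Longrightarrow> \<not> ssat T P (neg A)"
  unfolding ssat_def by (rule consistent_sat_neg)

lemma ssat_base_par:
  assumes "consistent T" "consistent P" "base_par A" "ssat T P A"
  shows "code A \<in> snd T"
  using deriv_sound[of "{A}" "{NTr (gq A)}" T P "\<lambda>_. 0"] assms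
  unfolding base_par_def ssat_def gq_def by simp

lemma ssat_neg_base_par:
  assumes "consistent T" "consistent P" "base_par A" "ssat T P (neg A)"
  shows "code A \<in> fst T"
  using deriv_sound[of "{neg A}" "{Tr (gq A)}" T P "\<lambda>_. 0"] assms
  unfolding base_par_def ssat_def gq_def by simp

lemma not_Pi_Pr: "\<not> Pi (Pr t)"
proof
  let ?n = "evalt (\<lambda>_. 0) t"
  have "\<not> base_par (Pr t)"
    using ssat_base_par[of "({}, {})" "({?n}, {})" "Pr t"]
    by (auto simp: consistent_def ssat_def)
  moreover have "\<not> base_par (NPr t)"
    using ssat_base_par[of "({}, {})" "({}, {?n})" "NPr t"]
    by (auto simp: consistent_def ssat_def)
  moreover assume "Pi (Pr t)"
  ultimately show False by (simp add: Pi_def)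
qed

definition gap :: "pext \<Rightarrow> pext \<Rightarrow> form \<Rightarrow> bool" where
  "gap T P A \<longleftrightarrow> \<not> ssat T P A \<and> \<not> ssat T P (neg A)"

lemma gap_Conj:
  assumes "consistent T" "consistent P"
    and "gap T P B \<or> ssat T P B" "gap T P C \<or> ssat T P C" "gap T P B \<or> gap T P C"
  shows "gap T P (Conj B C)"
  using assms consistent_ssat_neg[OF assms(1,2)] by (auto simp: gap_def ssat_def)

lemma gap_Disj:
  assumes "consistent T" "consistent P"
    and "gap T P B \<or> ssat T P (neg B)" "gap T P C \<or> ssat T P (neg C)" "gap T P B \<or> gap T P C"
  shows "gap T P (Disj B C)"
  using assms consistent_ssat_neg[OF assms(1,2)] by (auto simp: gap_def ssat_def)

lemma gap_All:
  assumes "consistent T" "consistent P"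
    and "\<forall>n. gap T P (subst v (num n) B) \<or> ssat T P (subst v (num n) B)"
    and "\<exists>n. gap T P (subst v (num n) B)"
  shows "gap T P (All v B)"
  using assms consistent_ssat_neg[OF assms(1,2)]
  by (auto simp: gap_def ssat_All ssat_Ex subst_neg)

lemma gap_Ex:
  assumes "consistent T" "consistent P"
    and "\<forall>n. gap T P (subst v (num n) B) \<or> ssat T P (neg (subst v (num n) B))"
    and "\<exists>n. gap T P (subst v (num n) B)"
  shows "gap T P (Ex v B)"
  using assms consistent_ssat_neg[OF assms(1,2)]
  by (auto simp: gap_def ssat_All ssat_Ex subst_neg)

(* Unlike size, this ignores the terms, so it is invariant under substitution. *)
fun complexity :: "form \<Rightarrow> nat" where
  "complexity (Conj A B) = Suc (complexity A + complexity B)"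
| "complexity (Disj A B) = Suc (complexity A + complexity B)"
| "complexity (All x A) = Suc (complexity A)"
| "complexity (Ex x A) = Suc (complexity A)"
| "complexity _ = 0"

lemma complexity_subst [simp]: "complexity (subst x t A) = complexity A"
  by (induct A) auto

lemma scrP_cases [consumes 1, case_names Pi Tr NTr Conj Disj All Ex]:
  assumes "scrP T P A"
  obtains "Pi A"
  | t where "A = Tr t" "evalt (\<lambda>_. 0) t \<in> fst P"
  | t where "A = NTr t" "evalt (\<lambda>_. 0) t \<in> fst P"
  | B C where "A = Conj B C"
      "code B \<in> fst P \<and> code C \<in> fst P \<or> code B \<in> fst T \<and> code C \<in> fst P
       \<or> code C \<in> fst T \<and> code B \<in> fst P"
  | B C where "A = Disj B C"
      "code B \<in> fst P \<and> code C \<in> fst P \<or> code B \<in> snd T \<and> code C \<in> fst P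
       \<or> code C \<in> snd T \<and> code B \<in> fst P"
  | v B where "A = All v B" "\<exists>n. code (subst v (num n) B) \<in> fst P"
      "\<forall>n. code (subst v (num n) B) \<in> fst P \<or> code (subst v (num n) B) \<in> fst T"
  | v B where "A = Ex v B" "\<exists>n. code (subst v (num n) B) \<in> fst P"
      "\<forall>n. code (subst v (num n) B) \<in> fst P \<or> code (subst v (num n) B) \<in> snd T"
  using assms unfolding scrP_def by blast

lemma GammaStar_code_iff:
  "code A \<in> fst (fst (GammaStar (T, P))) \<longleftrightarrow> sentence A \<and> ssat T P A"
  "code A \<in> snd (fst (GammaStar (T, P))) \<longleftrightarrow> sentence A \<and> ssat T P (neg A)"
  "code A \<in> fst (snd (GammaStar (T, P))) \<longleftrightarrow> sentence A \<and> scrP T P A"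
  "code A \<in> snd (snd (GammaStar (T, P))) \<longleftrightarrow>
     sentence A \<and> ssat T P (Disj A (neg A)) \<or> code A \<in> P0star"
  by (auto simp: GammaStar_def dest: code_inj)

lemma le_GammaStarD:
  assumes "(T, P) \<le> GammaStar (T, P)"
  shows "code A \<in> fst T \<Longrightarrow> ssat T P A"
    and "code A \<in> snd T \<Longrightarrow> ssat T P (neg A)"
    and "code A \<in> fst P \<Longrightarrow> scrP T P A"
proof -
  have "fst T \<subseteq> fst (fst (GammaStar (T, P)))" "snd T \<subseteq> snd (fst (GammaStar (T, P)))"
    "fst P \<subseteq> fst (snd (GammaStar (T, P)))"
    using assms by (simp_all add: less_eq_prod_def)
  then show "code A \<in> fst T \<Longrightarrow> ssat T P A" "code A \<in> snd T \<Longrightarrow> ssat T P (neg A)"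
    "code A \<in> fst P \<Longrightarrow> scrP T P A"
    using GammaStar_code_iff by blast+
qed

lemma gap_Pi:
  assumes "consistent T" "consistent P" "(T, P) \<le> GammaStar (T, P)" "Pi A"
  shows "gap T P A"
proof -
  have "\<not> ssat T P B \<and> \<not> ssat T P (neg B)" if "base_par B" for B
    using ssat_base_par[OF assms(1,2) that] ssat_neg_base_par[OF assms(1,2) that]
      le_GammaStarD[OF assms(3)] consistent_ssat_neg[OF assms(1,2)]
    by blast
  with assms(4) show ?thesis unfolding Pi_def gap_def by fastforce
qed

definition coherent :: "pext \<times> pext \<Rightarrow> bool" where
  "coherent X \<longleftrightarrow> consistent (fst X) \<and> consistent (snd X)
     \<and> fst (snd X) \<inter> (fst (fst X) \<union> snd (fst X)) = {}"

lemma scrP_gap: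
  assumes "coherent (T, P)" "(T, P) \<le> GammaStar (T, P)" "scrP T P A"
  shows "gap T P A"
  using assms(3)
proof (induct "complexity A" arbitrary: A rule: less_induct)
  case less
  have cons: "consistent T" "consistent P" using assms(1) by (simp_all add: coherent_def)
  note T_sound = le_GammaStarD(1,2)[OF assms(2)]
  have IH: "gap T P B" if "complexity B < complexity A" "code B \<in> fst P" for B
    using less.hyps that le_GammaStarD(3)[OF assms(2)] by blast
  from less.prems show ?case
  proof (cases rule: scrP_cases)
    case Pi
    then show ?thesis by (rule gap_Pi[OF cons assms(2)])
  next
    case (Tr t)
    then show ?thesis using assms(1) by (auto simp: gap_def ssat_def coherent_def)
  next
    case (NTr t)
    then show ?thesis using assms(1) by (auto simp: gap_def ssat_def coherent_def)
  next
    case (Conj B C)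
    then have "gap T P B \<or> ssat T P B" "gap T P C \<or> ssat T P C" "gap T P B \<or> gap T P C"
      using IH T_sound by auto
    with Conj(1) show ?thesis by (simp add: gap_Conj[OF cons])
  next
    case (Disj B C)
    then have "gap T P B \<or> ssat T P (neg B)" "gap T P C \<or> ssat T P (neg C)"
      "gap T P B \<or> gap T P C"
      using IH T_sound by auto
    with Disj(1) show ?thesis by (simp add: gap_Disj[OF cons])
  next
    case (All v B)
    then have "code (subst v (num n) B) \<in> fst P \<Longrightarrow> gap T P (subst v (num n) B)" for n
      using IH by simp
    with All(2,3) T_sound have "\<forall>n. gap T P (subst v (num n) B) \<or> ssat T P (subst v (num n) B)"
      "\<exists>n. gap T P (subst v (num n) B)"
      by blast+
    with All(1) show ?thesis by (simp add: gap_All[OF cons])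
  next
    case (Ex v B)
    then have "code (subst v (num n) B) \<in> fst P \<Longrightarrow> gap T P (subst v (num n) B)" for n
      using IH by simp
    with Ex(2,3) T_sound have "\<forall>n. gap T P (subst v (num n) B) \<or> ssat T P (neg (subst v (num n) B))"
      "\<exists>n. gap T P (subst v (num n) B)"
      by blast+
    with Ex(1) show ?thesis by (simp add: gap_Ex[OF cons])
  qed
qed

lemma not_scrP_P0star:
  assumes "code A \<in> P0star"
  shows "\<not> scrP T P A"
proof -
  from assms obtain B where "code A = code (Pr (gq B))"
    unfolding P0star_def by blast
  then have "A = Pr (gq B)" by (rule code_inj)
  then show ?thesis using not_Pi_Pr by (simp add: scrP_def)
qed

lemma coherent_GammaStar:
  assumes "coherent (T, P)" "(T, P) \<le> GammaStar (T, P)"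
  shows "coherent (GammaStar (T, P))"
proof -
  let ?G = "GammaStar (T, P)"
  have cons: "consistent T" "consistent P" using assms(1) by (simp_all add: coherent_def)
  have codes: "\<exists>A. x = code A" if "x \<in> fst (fst ?G) \<or> x \<in> fst (snd ?G)" for x
    using that by (auto simp: GammaStar_def)
  have "code A \<notin> fst (fst ?G) \<inter> snd (fst ?G)"
    and "code A \<notin> fst (snd ?G) \<inter> snd (snd ?G)"
    and "code A \<notin> fst (snd ?G) \<inter> (fst (fst ?G) \<union> snd (fst ?G))" for A
    using consistent_ssat_neg[OF cons] scrP_gap[OF assms] not_scrP_P0star[of _ T P]
    by (auto simp: GammaStar_code_iff gap_def ssat_def)
  with codes show ?thesis unfolding coherent_def consistent_def by blast
qed

lemma sat_mono: "T \<le> T' \<Longrightarrow> P \<le> P' \<Longrightarrow> sat T P e A \<Longrightarrow> sat T' P' e A"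
  by (induct A arbitrary: e) (auto simp: less_eq_prod_def)

lemma scrP_mono:
  assumes "T \<le> T'" "P \<le> P'" "scrP T P A"
  shows "scrP T' P' A"
proof -
  have "sentence A" using assms(3) by (simp add: scrP_def)
  have sub: "fst T \<subseteq> fst T'" "snd T \<subseteq> snd T'" "fst P \<subseteq> fst P'"
    using assms(1,2) by (simp_all add: less_eq_prod_def)
  from assms(3) show ?thesis
  proof (cases rule: scrP_cases)
    case (Conj B C)
    with sub have "code B \<in> fst P' \<and> code C \<in> fst P' \<or> code B \<in> fst T' \<and> code C \<in> fst P'
       \<or> code C \<in> fst T' \<and> code B \<in> fst P'" by blast
    with Conj(1) \<open>sentence A\<close> show ?thesis by (simp add: scrP_def)
  next
    case (Disj B C)
    with sub have "code B \<in> fst P' \<and> code C \<in> fst P' \<or> code B \<in> snd T' \<and> code C \<in> fst P'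
       \<or> code C \<in> snd T' \<and> code B \<in> fst P'" by blast
    with Disj(1) \<open>sentence A\<close> show ?thesis by (simp add: scrP_def)
  next
    case (All v B)
    with sub have "\<exists>n. code (subst v (num n) B) \<in> fst P'"
      "\<forall>n. code (subst v (num n) B) \<in> fst P' \<or> code (subst v (num n) B) \<in> fst T'" by blast+
    with All(1) \<open>sentence A\<close> show ?thesis by (simp add: scrP_def)
  next
    case (Ex v B)
    with sub have "\<exists>n. code (subst v (num n) B) \<in> fst P'"
      "\<forall>n. code (subst v (num n) B) \<in> fst P' \<or> code (subst v (num n) B) \<in> snd T'" by blast+
    with Ex(1) \<open>sentence A\<close> show ?thesis by (simp add: scrP_def)
  qed (use \<open>sentence A\<close> sub in \<open>auto simp: scrP_def sentence_def\<close>)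
qed

lemma mono_GammaStar: "mono GammaStar"
proof (rule monoI)
  fix X Y :: "pext \<times> pext"
  assume "X \<le> Y"
  then obtain T P T' P' where "X = (T, P)" "Y = (T', P')" "T \<le> T'" "P \<le> P'"
    by (cases X, cases Y) simp
  moreover have "ssat T P A \<Longrightarrow> ssat T' P' A" "scrP T P A \<Longrightarrow> scrP T' P' A" for A
    using \<open>T \<le> T'\<close> \<open>P \<le> P'\<close> unfolding ssat_def by (auto intro: sat_mono scrP_mono)
  ultimately show "GammaStar X \<le> GammaStar Y"
    by (fastforce simp: GammaStar_def less_eq_prod_def)
qed

lemma admissible_disjoint:
  fixes f g :: "'a::complete_lattice \<Rightarrow> 'b set"
  assumes f: "\<And>M. f (Sup M) = (\<Union>x\<in>M. f x)" and g: "\<And>M. g (Sup M) = (\<Union>x\<in>M. g x)"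
  shows "ccpo.admissible Sup (\<le>) (\<lambda>x. f x \<inter> g x = {})"
proof (rule ccpo.admissibleI)
  fix M assume chain: "Complete_Partial_Order.chain (\<le>) M" and "\<forall>x\<in>M. f x \<inter> g x = {}"
  have mono: "f x \<subseteq> f y" "g x \<subseteq> g y" if "x \<le> y" for x y
  proof -
    have "f x \<subseteq> f (Sup {x, y})" "g x \<subseteq> g (Sup {x, y})" unfolding f g by auto
    moreover have "Sup {x, y} = y" using that by (simp add: sup_absorb2)
    ultimately show "f x \<subseteq> f y" "g x \<subseteq> g y" by simp_all
  qed
  have "c \<notin> g y" if "x \<in> M" "y \<in> M" "c \<in> f x" for c x y
    using chainD[OF chain that(1,2)] that \<open>\<forall>x\<in>M. f x \<inter> g x = {}\<close> mono by blast
  then show "f (Sup M) \<inter> g (Sup M) = {}" unfolding f g by blast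
qed

lemma admissible_le_self:
  fixes f :: "'a::complete_lattice \<Rightarrow> 'a"
  assumes "mono f"
  shows "ccpo.admissible Sup (\<le>) (\<lambda>x. x \<le> f x)"
proof (rule ccpo.admissibleI)
  fix M assume "\<forall>x\<in>M. x \<le> f x"
  then have "x \<le> f (Sup M)" if "x \<in> M" for x
    using that monoD[OF assms Sup_upper[OF that]] by (blast intro: order_trans)
  then show "Sup M \<le> f (Sup M)" by (rule Sup_least)
qed

lemma admissible_coherent: "ccpo.admissible Sup (\<le>) coherent"
proof -
  have Sup_components:
    "fst (fst (Sup M)) = (\<Union>X\<in>M. fst (fst X))" "snd (fst (Sup M)) = (\<Union>X\<in>M. snd (fst X))"
    "fst (snd (Sup M)) = (\<Union>X\<in>M. fst (snd X))" "snd (snd (Sup M)) = (\<Union>X\<in>M. snd (snd X))"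
    for M :: "(pext \<times> pext) set"
    by (simp_all add: fst_Sup snd_Sup image_image)
  have coherent_eq: "coherent = (\<lambda>X. (fst (fst X) \<inter> snd (fst X) = {} \<and> fst (snd X) \<inter> snd (snd X) = {})
      \<and> fst (snd X) \<inter> fst (fst X) = {} \<and> fst (snd X) \<inter> snd (fst X) = {})"
    by (simp add: fun_eq_iff coherent_def consistent_def Int_Un_distrib)
  show ?thesis unfolding coherent_eq
    by (intro admissible_conj admissible_disjoint; rule Sup_components)
qed

lemma coherent_lfpStar: "coherent lfpStar"
proof -
  have "coherent (ccpo_class.fixp GammaStar) \<and>
      ccpo_class.fixp GammaStar \<le> GammaStar (ccpo_class.fixp GammaStar)"
  proof (rule fixp_induct)
    show "ccpo.admissible Sup (\<le>) (\<lambda>X. coherent X \<and> X \<le> GammaStar X)"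
      using admissible_coherent admissible_le_self[OF mono_GammaStar] by (rule admissible_conj)
    show "monotone (\<le>) (\<le>) GammaStar"
      using mono_GammaStar by (simp add: monotone_def mono_def)
    show "coherent (Sup {}) \<and> Sup {} \<le> GammaStar (Sup {})"
      by (simp add: coherent_def consistent_def)
    show "coherent (GammaStar X) \<and> GammaStar X \<le> GammaStar (GammaStar X)"
      if "coherent X \<and> X \<le> GammaStar X" for X
      using that coherent_GammaStar[of "fst X" "snd X"] monoD[OF mono_GammaStar] by simp
  qed
  then show ?thesis by (simp add: lfpStar_def lfp_eq_fixp[OF mono_GammaStar])
qed

theorem mainTheorem15:
  fixes T P :: "nat set \<times> nat set"
  assumes "lfpStar = (T, P)"
  shows "fst T \<inter> snd T = {} \<and> fst P \<inter> snd P = {} \<and>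
    (\<forall>A. sentence A \<and> (code A \<in> P0star \<or> ssat T P (Disj A (neg A))) \<longrightarrow> \<not> scrP T P A)"
proof -
  have "coherent (T, P)" using coherent_lfpStar assms by simp
  then have cons: "fst T \<inter> snd T = {}" "fst P \<inter> snd P = {}"
    by (simp_all add: coherent_def consistent_def)
  have "GammaStar (T, P) = (T, P)"
    using lfp_fixpoint[OF mono_GammaStar] assms by (simp add: lfpStar_def)
  then have "code A \<in> fst P \<longleftrightarrow> sentence A \<and> scrP T P A"
    and "code A \<in> snd P \<longleftrightarrow> sentence A \<and> ssat T P (Disj A (neg A)) \<or> code A \<in> P0star" for A
    using GammaStar_code_iff(3,4)[of A T P] by simp_all
  with cons show ?thesis by blast
qed

end
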